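(* Let $T=(V,E,\gamma,\mathrm{p})$ be a fault tree and let $X=\{v\in V\mid v\text{ has more than one parent}\}$. Then Algorithm $\mathtt{SFPA2}$ (described in the context) on input $T$ has time complexity $\mathcal O(|V|(|X|+1)4^{|X|})$.
   Context: A fault tree (FT) is a tuple $T=(V,E,\gamma,\mathrm{p})$ where $(V,E)$ is a rooted directed acyclic graph (edges point from a node to its children; the root is denoted $R_T$), $\gamma\colon V\to\{\mathtt{OR},\mathtt{AND},\mathtt{BE}\}$ satisfies $\gamma(v)=\mathtt{BE}$ iff $v$ is a leaf, and $\mathrm{p}\colon \mathrm{BE}(T)\to[0,1]$ with $\mathrm{BE}(T)=\{v\in V\mid \gamma(v)=\mathtt{BE}\}$. Let $\mathrm{ch}(v)$ be the set of children of $v$. Order and dominators: write $x\preceq y$ iff there is a directed path (possibly of length $0$) from $y$ to $x$, and $x\prec y$ iff $x\preceq y$, $x\neq y$. A node $w$ dominates $v$ if $v\prec w$ and every directed path from $R_T$ to $v$ contains $w$. For every $v\neq R_T$ there is a unique dominator $\mathrm{id}(v)$ of $v$ (immediate dominator) with $\mathrm{id}(v)\preceq w'$ for every dominator $w'$ of $v$; all immediate dominators can be computed in time $\mathcal O(|E|)$. Squarefree polynomial algebra: for a finite set $X$, $\mathcal A(X)$ is the real algebra of formal sums $\alpha=\sum_{Y\subseteq X}\alpha_Y\prod_{x\in Y}\mathsf F_x$ with polynomial addition and multiplication subject to $\mathsf F_x^2=\mathsf F_x$, i.e. $(\alpha+\beta)_Y=\alpha_Y+\beta_Y$, $(\alpha\beta)_Y=\sum_{Y'\cup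 Y''=Y}\alpha_{Y'}\beta_{Y''}$. Elements of $\mathcal A(X)$ are regarded as elements of $\mathcal A(X')$ for $X\subseteq X'$; $\mathcal A(\varnothing)=\mathbb R$. For $x\in X\setminus Y$, $\alpha\in\mathcal A(X)$, $\beta\in\mathcal A(Y)$, the substitution $\alpha[\mathsf F_x\mapsto\beta]\in\mathcal A((X\setminus\{x\})\cup Y)$ is $\beta\cdot\sum_{Z\ni x}\alpha_Z\prod_{x'\in Z\setminus\{x\}}\mathsf F_{x'}+\sum_{Z\not\ni x}\alpha_Z\prod_{x'\in Z}\mathsf F_{x'}$. Algorithm $\mathtt{SFPA2}(T)$: set $\mathsf{ToDo}\leftarrow V$. While $\mathsf{ToDo}\neq\varnothing$: pick $v\in\mathsf{ToDo}$ minimal w.r.t. $\preceq$ and remove it. If $\gamma(v)=\mathtt{BE}$, set $g_v\leftarrow\mathrm{p}(v)$. Otherwise let $S_v=\{w\in\mathrm{ch}(v)\mid\mathrm{id}(w)=v\}$; if $\gamma(v)=\mathtt{OR}$ set $g_v\leftarrow 1-\prod_{w\in S_v}(1-g_w)\cdot\prod_{w\in\mathrm{ch}(v)\setminus S_v}(1-\mathsf F_w)$; if $\gamma(v)=\mathtt{AND}$ set $g_v\leftarrow\prod_{w\in S_v}g_w\cdot\prod_{w\in\mathrm{ch}(v)\setminus S_v}\mathsf F_w$. Then set $\mathsf{ToDo}_v\leftarrow\{w\in V\setminus\mathrm{ch}(v)\mid\mathrm{id}(w)=v\}$ and, while $\mathsf{ToDo}_v\neq\varnothing$, pick $w\in\mathsf{ToDo}_v$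 maximal w.r.t. $\preceq$, remove it, and set $g_v\leftarrow g_v[\mathsf F_w\mapsto g_w]$. Return $g_{R_T}$. (This algorithm outputs the unreliability of $T$.) Time complexity counts real arithmetic operations as unit cost. *)

theory Defs
  imports Complex_Main
begin

datatype gate = OR | AND | BE

record 'a fault_tree =
  nodes :: "'a set"
  edges :: "('a \<times> 'a) set"
  root  :: "'a"
  gtype :: "'a \<Rightarrow> gate"
  prob  :: "'a \<Rightarrow> real"

definition ch :: "'a fault_tree \<Rightarrow> 'a \<Rightarrow> 'a set" where
  "ch T v = {w. (v, w) \<in> edges T}"

definition parents :: "'a fault_tree \<Rightarrow> 'a \<Rightarrow> 'a set" where
  "parents T v = {u. (u, v) \<in> edges T}"

definition fault_tree :: "'a fault_tree \<Rightarrow> bool" where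
  "fault_tree T \<longleftrightarrow>
     finite (nodes T) \<and> edges T \<subseteq> nodes T \<times> nodes T \<and> acyclic (edges T) \<and>
     root T \<in> nodes T \<and> (\<forall>v \<in> nodes T. (root T, v) \<in> (edges T)\<^sup>*) \<and>
     (\<forall>v \<in> nodes T. gtype T v = BE \<longleftrightarrow> ch T v = {}) \<and>
     (\<forall>v \<in> nodes T. gtype T v = BE \<longrightarrow> 0 \<le> prob T v \<and> prob T v \<le> 1)"

definition preceq :: "'a fault_tree \<Rightarrow> 'a \<Rightarrow> 'a \<Rightarrow> bool" where
  "preceq T x y \<longleftrightarrow> (y, x) \<in> (edges T)\<^sup>*"

definition prec :: "'a fault_tree \<Rightarrow> 'a \<Rightarrow> 'a \<Rightarrow> bool" where
  "prec T x y \<longleftrightarrow> preceq T x y \<and> x \<noteq> y"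

definition is_path :: "'a fault_tree \<Rightarrow> 'a list \<Rightarrow> bool" where
  "is_path T xs \<longleftrightarrow> xs \<noteq> [] \<and> (\<forall>i. Suc i < length xs \<longrightarrow> (xs ! i, xs ! Suc i) \<in> edges T)"

definition dominates :: "'a fault_tree \<Rightarrow> 'a \<Rightarrow> 'a \<Rightarrow> bool" where
  "dominates T w v \<longleftrightarrow> prec T v w \<and>
     (\<forall>xs. is_path T xs \<and> hd xs = root T \<and> last xs = v \<longrightarrow> w \<in> set xs)"

text \<open>Immediate dominator (meaningful for v \<noteq> root).\<close>
definition idom :: "'a fault_tree \<Rightarrow> 'a \<Rightarrow> 'a" where
  "idom T v = (THE w. dominates T w v \<and> (\<forall>w'. dominates T w' v \<longrightarrow> preceq T w w'))"

definition multi_parent :: "'a fault_tree \<Rightarrow> 'a set" where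
  "multi_parent T = {v \<in> nodes T. card (parents T v) > 1}"

text \<open>An element of A(X) is represented by its declared variable set X together with its
  coefficient function (only coefficients of subsets of X are used); such an element is
  stored as 2^|X| real coefficients.\<close>
type_synonym 'a sfp = "'a set \<times> ('a set \<Rightarrow> real)"

definition sfp_const :: "real \<Rightarrow> 'a sfp" where
  "sfp_const c = ({}, \<lambda>Y. if Y = {} then c else 0)"

definition sfp_var :: "'a \<Rightarrow> 'a sfp" where
  "sfp_var x = ({x}, \<lambda>Y. if Y = {x} then 1 else 0)"

definition sfp_add :: "'a sfp \<Rightarrow> 'a sfp \<Rightarrow> 'a sfp" where
  "sfp_add \<alpha> \<beta> = (fst \<alpha> \<union> fst \<beta>, \<lambda>Y. snd \<alpha> Y + snd \<beta> Y)"

definition sfp_sub :: "'a sfp \<Rightarrow> 'a sfp \<Rightarrow> 'a sfp" where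
  "sfp_sub \<alpha> \<beta> = (fst \<alpha> \<union> fst \<beta>, \<lambda>Y. snd \<alpha> Y - snd \<beta> Y)"

definition sfp_mult :: "'a sfp \<Rightarrow> 'a sfp \<Rightarrow> 'a sfp" where
  "sfp_mult \<alpha> \<beta> = (fst \<alpha> \<union> fst \<beta>,
     \<lambda>Y. \<Sum>Y'\<in>Pow (fst \<alpha>). \<Sum>Y''\<in>Pow (fst \<beta>).
            if Y' \<union> Y'' = Y then snd \<alpha> Y' * snd \<beta> Y'' else 0)"

text \<open>alpha[F_x := beta] = beta * alpha1 + alpha0 where alpha1 collects the monomials
  containing x (with x removed) and alpha0 the others.\<close>
definition sfp_part1 :: "'a \<Rightarrow> 'a sfp \<Rightarrow> 'a sfp" where
  "sfp_part1 x \<alpha> = (fst \<alpha> - {x}, \<lambda>Y. if x \<notin> Y then snd \<alpha> (insert x Y) else 0)"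

definition sfp_part0 :: "'a \<Rightarrow> 'a sfp \<Rightarrow> 'a sfp" where
  "sfp_part0 x \<alpha> = (fst \<alpha> - {x}, \<lambda>Y. if x \<notin> Y then snd \<alpha> Y else 0)"

definition sfp_subst :: "'a \<Rightarrow> 'a sfp \<Rightarrow> 'a sfp \<Rightarrow> 'a sfp" where
  "sfp_subst x \<alpha> \<beta> = sfp_add (sfp_mult \<beta> (sfp_part1 x \<alpha>)) (sfp_part0 x \<alpha>)"

text \<open>Numbers of real arithmetic operations (naive coefficientwise algorithms).\<close>
definition add_cost :: "'a sfp \<Rightarrow> 'a sfp \<Rightarrow> nat" where
  "add_cost \<alpha> \<beta> = 2 ^ card (fst \<alpha> \<union> fst \<beta>)"

definition mult_cost :: "'a sfp \<Rightarrow> 'a sfp \<Rightarrow> nat" where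
  "mult_cost \<alpha> \<beta> = 2 * 2 ^ card (fst \<alpha>) * 2 ^ card (fst \<beta>)"

definition subst_cost :: "'a \<Rightarrow> 'a sfp \<Rightarrow> 'a sfp \<Rightarrow> nat" where
  "subst_cost x \<alpha> \<beta> = mult_cost \<beta> (sfp_part1 x \<alpha>)
     + add_cost (sfp_mult \<beta> (sfp_part1 x \<alpha>)) (sfp_part0 x \<alpha>)"

definition S_set :: "'a fault_tree \<Rightarrow> 'a \<Rightarrow> 'a set" where
  "S_set T v = {w \<in> ch T v. w \<noteq> root T \<and> idom T w = v}"

definition ToDo_set :: "'a fault_tree \<Rightarrow> 'a \<Rightarrow> 'a set" where
  "ToDo_set T v = {w \<in> nodes T - ch T v. w \<noteq> root T \<and> idom T w = v}"

definition init_node :: "'a fault_tree \<Rightarrow> ('a \<Rightarrow> 'a sfp) \<Rightarrow> 'a list \<Rightarrow> 'a \<Rightarrow> 'a sfp \<times> nat" where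
  "init_node T g cs v =
     (case gtype T v of
        BE \<Rightarrow> (sfp_const (prob T v), 0)
      | AND \<Rightarrow> foldl (\<lambda>(acc, c) w.
                 let f = (if w \<in> S_set T v then g w else sfp_var w)
                 in (sfp_mult acc f, c + mult_cost acc f)) (sfp_const 1, 0) cs
      | OR \<Rightarrow> (let (acc, c) = foldl (\<lambda>(acc, c) w.
                 let f0 = (if w \<in> S_set T v then g w else sfp_var w);
                     f = sfp_sub (sfp_const 1) f0
                 in (sfp_mult acc f, c + add_cost (sfp_const 1) f0 + mult_cost acc f))
                 (sfp_const 1, 0) cs
               in (sfp_sub (sfp_const 1) acc, c + add_cost (sfp_const 1) acc)))"

definition process_node :: "'a fault_tree \<Rightarrow> ('a \<Rightarrow> 'a sfp) \<Rightarrow> 'a list \<Rightarrow> 'a list \<Rightarrow> 'a \<Rightarrow> 'a sfp \<times> nat" where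
  "process_node T g cs ws v =
     (if gtype T v = BE then init_node T g cs v
      else foldl (\<lambda>(acc, c) w. (sfp_subst w acc (g w), c + subst_cost w acc (g w)))
             (init_node T g cs v) ws)"

text \<open>A run of SFPA2: vs is the order in which the outer loop picks nodes, cs v the order
  in which the products at v are evaluated, ws v the order of the inner loop at v.\<close>
definition sfpa2_run :: "'a fault_tree \<Rightarrow> 'a list \<Rightarrow> ('a \<Rightarrow> 'a list) \<Rightarrow> ('a \<Rightarrow> 'a list)
    \<Rightarrow> ('a \<Rightarrow> 'a sfp) \<times> nat" where
  "sfpa2_run T vs cs ws =
     foldl (\<lambda>(g, c) v. let (r, c') = process_node T g (cs v) (ws v) v in (g(v := r), c + c'))
       (\<lambda>_. sfp_const 0, 0) vs"

definition sfpa2_cost :: "'a fault_tree \<Rightarrow> 'a list \<Rightarrow> ('a \<Rightarrow> 'a list) \<Rightarrow> ('a \<Rightarrow> 'a list) \<Rightarrow> nat" where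
  "sfpa2_cost T vs cs ws = snd (sfpa2_run T vs cs ws)"

text \<open>Admissible choices: the outer loop always picks a \<preceq>-minimal remaining node,
  the inner loop always a \<preceq>-maximal remaining node; products in any order.\<close>
definition valid_outer :: "'a fault_tree \<Rightarrow> 'a list \<Rightarrow> bool" where
  "valid_outer T vs \<longleftrightarrow> distinct vs \<and> set vs = nodes T \<and>
     (\<forall>i j. i < j \<and> j < length vs \<longrightarrow> \<not> prec T (vs ! j) (vs ! i))"

definition valid_children :: "'a fault_tree \<Rightarrow> ('a \<Rightarrow> 'a list) \<Rightarrow> bool" where
  "valid_children T cs \<longleftrightarrow> (\<forall>v \<in> nodes T. distinct (cs v) \<and> set (cs v) = ch T v)"

definition valid_inner :: "'a fault_tree \<Rightarrow> ('a \<Rightarrow> 'a list) \<Rightarrow> bool" where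
  "valid_inner T ws \<longleftrightarrow> (\<forall>v \<in> nodes T. distinct (ws v) \<and> set (ws v) = ToDo_set T v \<and>
     (\<forall>i j. i < j \<and> j < length (ws v) \<longrightarrow> \<not> prec T (ws v ! i) (ws v ! j)))"

end

theory Submission
  imports Defs
begin

text \<open>A child w of v with a single parent has immediate dominator v, so SFPA2 introduces a
  variable F_w only for nodes w with several parents: every polynomial it handles lies in A(X)
  and is stored as at most 2^|X| coefficients, whence every addition, multiplication or
  substitution costs at most 3 * 4^|X| operations. Node v performs |ch(v)| + |ToDo_v| + 1 of
  them. The sets ToDo_v are disjoint, and so are the sets ch(v) - X, so in total there are at
  most |V|(|X| + 1) + 2|V| operations.\<close>

lemma is_path_Cons:
  assumes "is_path T xs" "(u, hd xs) \<in> edges T"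
  shows "is_path T (u # xs)"
  using assms by (auto simp: is_path_def nth_Cons hd_conv_nth split: nat.split)

lemma is_path_ending_in_child:
  assumes "(a, v) \<in> (edges T)\<^sup>*" "(v, w) \<in> edges T"
  shows "\<exists>xs. is_path T xs \<and> hd xs = a \<and> last xs = w \<and>
           (\<forall>x\<in>set xs. x = w \<or> (x, v) \<in> (edges T)\<^sup>*)"
  using assms(1)
proof (induction rule: converse_rtrancl_induct)
  case base
  have "is_path T [v, w]"
    using assms(2) by (auto simp: is_path_def less_Suc_eq nth_Cons split: nat.split)
  then show ?case by (intro exI[of _ "[v, w]"]) auto
next
  case (step u u')
  then obtain xs where xs: "is_path T xs" "hd xs = u'" "last xs = w"
    "\<forall>x\<in>set xs. x = w \<or> (x, v) \<in> (edges T)\<^sup>*" by blast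
  moreover have "xs \<noteq> []" using xs(1) by (simp add: is_path_def)
  moreover have "(u, v) \<in> (edges T)\<^sup>*" using step by (meson converse_rtrancl_into_rtrancl)
  ultimately show ?case using step is_path_Cons[of T xs u]
    by (intro exI[of _ "u # xs"]) auto
qed

lemma is_path_last_edge:
  assumes "is_path T xs" "hd xs \<noteq> last xs"
  shows "\<exists>u\<in>set xs. (u, last xs) \<in> edges T"
proof -
  define n where "n = length xs"
  have "xs \<noteq> []" using assms(1) by (simp add: is_path_def)
  then have "n \<noteq> 0" "n \<noteq> 1" using assms(2) unfolding n_def by (cases xs; auto)+
  then have "n \<ge> 2" by linarith
  then have "(xs ! (n - 2), xs ! Suc (n - 2)) \<in> edges T" and "Suc (n - 2) = n - 1"
    using assms(1) unfolding n_def is_path_def by auto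
  with \<open>xs \<noteq> []\<close> \<open>n \<ge> 2\<close> show ?thesis unfolding n_def
    by (metis diff_less last_conv_nth nth_mem zero_less_numeral less_le_trans)
qed

lemma idom_of_unique_parent:
  assumes acyc: "acyclic (edges T)" and rv: "(root T, v) \<in> (edges T)\<^sup>*"
    and par: "parents T w = {v}"
  shows "w \<noteq> root T" "idom T w = v"
proof -
  have vw: "(v, w) \<in> edges T" using par by (auto simp: parents_def)
  have antisym: "\<And>x y. (x, y) \<in> (edges T)\<^sup>* \<Longrightarrow> (y, x) \<in> (edges T)\<^sup>* \<Longrightarrow> x = y"
    using acyclic_impl_antisym_rtrancl[OF acyc] by (auto dest: antisymD)
  have "w \<noteq> v" using vw acyc by (auto simp: acyclic_def)
  then show w_not_root: "w \<noteq> root T"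
    using antisym[OF rv] vw by auto
  have dom: "dominates T v w"
    unfolding dominates_def
  proof (intro conjI allI impI)
    show "prec T w v" using vw \<open>w \<noteq> v\<close> by (auto simp: prec_def preceq_def)
    fix xs assume xs: "is_path T xs \<and> hd xs = root T \<and> last xs = w"
    then obtain u where "u \<in> set xs" "(u, w) \<in> edges T"
      using is_path_last_edge[of T xs] w_not_root by auto
    then show "v \<in> set xs" using par by (auto simp: parents_def)
  qed
  have least: "preceq T v w'" if "dominates T w' w" for w'
  proof -
    obtain xs where xs: "is_path T xs" "hd xs = root T" "last xs = w"
      "\<forall>x\<in>set xs. x = w \<or> (x, v) \<in> (edges T)\<^sup>*"
      using is_path_ending_in_child[OF rv vw] by blast
    then have "w' \<in> set xs" "w' \<noteq> w" using that by (auto simp: dominates_def prec_def)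
    then show ?thesis using xs(4) by (auto simp: preceq_def)
  qed
  show "idom T w = v" unfolding idom_def
  proof (rule the_equality)
    fix x assume "dominates T x w \<and> (\<forall>w'. dominates T w' w \<longrightarrow> preceq T x w')"
    then show "x = v" using dom least antisym by (auto simp: preceq_def)
  qed (use dom least in blast)
qed

lemma finite_multi_parent: "fault_tree T \<Longrightarrow> finite (multi_parent T)"
  by (rule finite_subset[of _ "nodes T"]) (auto simp: multi_parent_def fault_tree_def)

lemma parents_eq_singleton:
  assumes "fault_tree T" "(v, w) \<in> edges T" "w \<notin> multi_parent T"
  shows "parents T w = {v}"
proof -
  have "finite (parents T w)" "w \<in> nodes T"
    using assms(1,2) unfolding fault_tree_def parents_def
    by (auto intro: finite_subset[of _ "nodes T"])
  moreover have "v \<in> parents T w" using assms(2) by (simp add: parents_def)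
  ultimately show ?thesis using assms(3) card_le_Suc0_iff_eq[of "parents T w"]
    by (auto simp: multi_parent_def not_less)
qed

lemma ch_subset_S_set_multi_parent:
  assumes "fault_tree T" "v \<in> nodes T"
  shows "ch T v \<subseteq> S_set T v \<union> multi_parent T"
proof
  fix w assume "w \<in> ch T v"
  moreover have "acyclic (edges T)" "(root T, v) \<in> (edges T)\<^sup>*"
    using assms by (auto simp: fault_tree_def)
  ultimately show "w \<in> S_set T v \<union> multi_parent T"
    using idom_of_unique_parent parents_eq_singleton[OF assms(1)]
    by (fastforce simp: S_set_def ch_def)
qed

lemma fst_sfp_ops [simp]:
  "fst (sfp_const c) = {}" "fst (sfp_var x) = {x}"
  "fst (sfp_add \<alpha> \<beta>) = fst \<alpha> \<union> fst \<beta>" "fst (sfp_sub \<alpha> \<beta>) = fst \<alpha> \<union> fst \<beta>"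
  "fst (sfp_mult \<alpha> \<beta>) = fst \<alpha> \<union> fst \<beta>"
  "fst (sfp_part1 x \<alpha>) = fst \<alpha> - {x}" "fst (sfp_part0 x \<alpha>) = fst \<alpha> - {x}"
  "fst (sfp_subst x \<alpha> \<beta>) = fst \<beta> \<union> (fst \<alpha> - {x})"
  by (auto simp: sfp_const_def sfp_var_def sfp_add_def sfp_sub_def sfp_mult_def
      sfp_part1_def sfp_part0_def sfp_subst_def)

lemma two_pow_card_mono: "finite X \<Longrightarrow> A \<subseteq> X \<Longrightarrow> (2::nat) ^ card A \<le> 2 ^ card X"
  by (intro power_increasing card_mono) auto

lemma add_cost_le:
  assumes "finite X" "fst \<alpha> \<subseteq> X" "fst \<beta> \<subseteq> X"
  shows "add_cost \<alpha> \<beta> \<le> 4 ^ card X"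
proof -
  have "add_cost \<alpha> \<beta> \<le> 2 ^ card X"
    unfolding add_cost_def using assms by (intro two_pow_card_mono) auto
  also have "\<dots> \<le> 4 ^ card X" by (simp add: power_mono)
  finally show ?thesis .
qed

lemma mult_cost_le:
  assumes "finite X" "fst \<alpha> \<subseteq> X" "fst \<beta> \<subseteq> X"
  shows "mult_cost \<alpha> \<beta> \<le> 2 * 4 ^ card X"
proof -
  have "mult_cost \<alpha> \<beta> \<le> 2 * 2 ^ card X * 2 ^ card X"
    unfolding mult_cost_def using assms
    by (intro mult_le_mono mult_le_mono2 two_pow_card_mono) auto
  also have "\<dots> = 2 * 4 ^ card X" by (simp flip: power_mult_distrib)
  finally show ?thesis .
qed

lemma subst_cost_le:
  assumes "finite X" "fst \<alpha> \<subseteq> X" "fst \<beta> \<subseteq> X"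
  shows "subst_cost x \<alpha> \<beta> \<le> 3 * 4 ^ card X"
proof -
  have "mult_cost \<beta> (sfp_part1 x \<alpha>) \<le> 2 * 4 ^ card X"
    using assms by (intro mult_cost_le) auto
  moreover have "add_cost (sfp_mult \<beta> (sfp_part1 x \<alpha>)) (sfp_part0 x \<alpha>) \<le> 4 ^ card X"
    using assms by (intro add_cost_le) auto
  ultimately show ?thesis by (simp add: subst_cost_def)
qed

lemma foldl_invariant_cost_le:
  fixes f :: "'s \<times> nat \<Rightarrow> 'x \<Rightarrow> 's \<times> nat"
  assumes step: "\<And>s c x. x \<in> set xs \<Longrightarrow> P s \<Longrightarrow> P (fst (f (s, c) x)) \<and> snd (f (s, c) x) \<le> c + B x"
    and "P (fst p)"
  shows "P (fst (foldl f p xs)) \<and> snd (foldl f p xs) \<le> snd p + (\<Sum>x\<leftarrow>xs. B x)"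
  using assms
proof (induction xs arbitrary: p)
  case (Cons x xs)
  obtain s c where p: "p = (s, c)" by fastforce
  have "P (fst (f p x)) \<and> snd (f p x) \<le> snd p + B x"
    using Cons.prems(1)[of x s c] Cons.prems(2) p by simp
  moreover have "P (fst (foldl f (f p x) xs)) \<and>
      snd (foldl f (f p x) xs) \<le> snd (f p x) + (\<Sum>x\<leftarrow>xs. B x)"
    using Cons.IH[of "f p x"] Cons.prems(1) calculation by simp
  ultimately show ?case by simp
qed simp

lemma init_node_cost_le:
  assumes X: "finite X" and g: "\<forall>u. fst (g u) \<subseteq> X" and cs: "set cs - S_set T v \<subseteq> X"
  shows "fst (fst (init_node T g cs v)) \<subseteq> X \<and>
    snd (init_node T g cs v) \<le> (length cs + 1) * (3 * 4 ^ card X)"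
proof -
  let ?B = "3 * 4 ^ card X :: nat"
  define F where "F w = (if w \<in> S_set T v then g w else sfp_var w)" for w
  have F: "fst (F w) \<subseteq> X" if "w \<in> set cs" for w
    using that g cs by (auto simp: F_def)
  show ?thesis
  proof (cases "gtype T v")
    case AND
    let ?step = "\<lambda>(acc, c) w. (sfp_mult acc (F w), c + mult_cost acc (F w))"
    have "mult_cost s (F w) \<le> ?B" if "w \<in> set cs" "fst s \<subseteq> X" for s w
      using mult_cost_le[OF X that(2) F[OF that(1)]] by simp
    then have "fst (fst (foldl ?step (sfp_const 1, 0) cs)) \<subseteq> X \<and>
        snd (foldl ?step (sfp_const 1, 0) cs) \<le> length cs * ?B"
      using foldl_invariant_cost_le[where P = "\<lambda>s. fst s \<subseteq> X" and B = "\<lambda>_. ?B"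
          and f = ?step and xs = cs and p = "(sfp_const 1, 0)"] F
      by (simp add: sum_list_triv)
    moreover have "init_node T g cs v = foldl ?step (sfp_const 1, 0) cs"
      using AND by (simp add: init_node_def F_def Let_def)
    ultimately show ?thesis by simp
  next
    case OR
    let ?step = "\<lambda>(acc, c) w. (sfp_mult acc (sfp_sub (sfp_const 1) (F w)),
      c + add_cost (sfp_const 1) (F w) + mult_cost acc (sfp_sub (sfp_const 1) (F w)))"
    obtain acc c where fold: "foldl ?step (sfp_const 1, 0) cs = (acc, c)" by fastforce
    have "fst acc \<subseteq> X \<and> c \<le> length cs * ?B"
    proof -
      have "add_cost (sfp_const 1) (F w) + mult_cost s (sfp_sub (sfp_const 1) (F w)) \<le> ?B"
        if "w \<in> set cs" "fst s \<subseteq> X" for s w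
        using add_cost_le[OF X, of "sfp_const 1" "F w"]
          mult_cost_le[OF X, of s "sfp_sub (sfp_const 1) (F w)"] F that by simp
      then show ?thesis
        using foldl_invariant_cost_le[where P = "\<lambda>s. fst s \<subseteq> X" and B = "\<lambda>_. ?B"
            and f = ?step and xs = cs and p = "(sfp_const 1, 0)"] F fold
        by (simp add: sum_list_triv)
    qed
    moreover have "add_cost (sfp_const 1) acc \<le> ?B"
      using add_cost_le[OF X, of "sfp_const 1" acc] calculation by simp
    moreover have "init_node T g cs v = (sfp_sub (sfp_const 1) acc, c + add_cost (sfp_const 1) acc)"
      using OR fold by (simp add: init_node_def F_def Let_def)
    ultimately show ?thesis by simp
  qed (simp add: init_node_def)
qed

lemma process_node_cost_le:
  assumes X: "finite X" and g: "\<forall>u. fst (g u) \<subseteq> X" and cs: "set cs - S_set T v \<subseteq> X"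
  shows "fst (fst (process_node T g cs ws v)) \<subseteq> X \<and>
    snd (process_node T g cs ws v) \<le> (length cs + length ws + 1) * (3 * 4 ^ card X)"
proof -
  let ?B = "3 * 4 ^ card X :: nat"
  let ?step = "\<lambda>(acc, c) w. (sfp_subst w acc (g w), c + subst_cost w acc (g w))"
  have init: "fst (fst (init_node T g cs v)) \<subseteq> X \<and> snd (init_node T g cs v) \<le> (length cs + 1) * ?B"
    using init_node_cost_le[OF assms] .
  have "fst (fst (foldl ?step (init_node T g cs v) ws)) \<subseteq> X \<and>
      snd (foldl ?step (init_node T g cs v) ws) \<le> snd (init_node T g cs v) + length ws * ?B"
    using foldl_invariant_cost_le[where P = "\<lambda>s. fst s \<subseteq> X" and B = "\<lambda>_. ?B"
        and f = ?step and xs = ws and p = "init_node T g cs v"] subst_cost_le[OF X] init g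
    by (auto simp: sum_list_triv)
  then show ?thesis
    using init by (auto simp: process_node_def algebra_simps)
qed

lemma sfpa2_cost_le:
  assumes ft: "fault_tree T" and cs: "valid_children T cs" and vs: "set vs \<subseteq> nodes T"
  shows "sfpa2_cost T vs cs ws
    \<le> (\<Sum>v\<leftarrow>vs. (length (cs v) + length (ws v) + 1) * (3 * 4 ^ card (multi_parent T)))"
proof -
  let ?X = "multi_parent T"
  let ?step = "\<lambda>(g, c) v. let (r, c') = process_node T g (cs v) (ws v) v in (g(v := r), c + c')"
  have "(\<forall>u. fst ((g(v := r)) u) \<subseteq> ?X) \<and> c' \<le> (length (cs v) + length (ws v) + 1) * (3 * 4 ^ card ?X)"
    if "v \<in> set vs" "\<forall>u. fst (g u) \<subseteq> ?X" "process_node T g (cs v) (ws v) v = (r, c')" for v g r c'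
  proof -
    have "v \<in> nodes T" using that(1) vs by auto
    then have "set (cs v) - S_set T v \<subseteq> ?X"
      using cs ch_subset_S_set_multi_parent[OF ft] by (auto simp: valid_children_def)
    from process_node_cost_le[OF finite_multi_parent[OF ft] that(2) this, where ws = "ws v"]
    show ?thesis using that(2,3) by simp
  qed
  then have "snd (foldl ?step (\<lambda>_. sfp_const 0, 0) vs)
      \<le> (\<Sum>v\<leftarrow>vs. (length (cs v) + length (ws v) + 1) * (3 * 4 ^ card ?X))"
    using foldl_invariant_cost_le[where P = "\<lambda>g. \<forall>u. fst (g u) \<subseteq> ?X" and f = ?step and xs = vs
        and p = "(\<lambda>_. sfp_const 0, 0)"
        and B = "\<lambda>v. (length (cs v) + length (ws v) + 1) * (3 * 4 ^ card ?X)"]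
    by (simp split: prod.split)
  then show ?thesis by (simp add: sfpa2_cost_def sfpa2_run_def)
qed

text \<open>A child outside multi_parent T has a unique parent, so the sets
  ch T v - multi_parent T are pairwise disjoint.\<close>
lemma sum_card_ch_le:
  assumes ft: "fault_tree T"
  shows "(\<Sum>v\<in>nodes T. card (ch T v)) \<le> card (nodes T) * (card (multi_parent T) + 1)"
proof -
  let ?X = "multi_parent T"
  have fin: "finite (nodes T)" and E: "edges T \<subseteq> nodes T \<times> nodes T"
    using ft by (auto simp: fault_tree_def)
  have ch: "ch T v \<subseteq> nodes T" for v using E by (auto simp: ch_def)
  have disjoint: "(ch T u - ?X) \<inter> (ch T v - ?X) = {}" if "u \<noteq> v" for u v
  proof (intro equalityI subsetI)
    fix w assume w: "w \<in> (ch T u - ?X) \<inter> (ch T v - ?X)"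
    have "{u, v} \<subseteq> parents T w" using w by (auto simp: ch_def parents_def)
    moreover have "finite (parents T w)"
      using E by (intro finite_subset[OF _ fin]) (auto simp: parents_def)
    ultimately have "card {u, v} \<le> card (parents T w)" by (rule card_mono[rotated])
    then have "w \<in> ?X" using \<open>u \<noteq> v\<close> w ch by (auto simp: multi_parent_def)
    then show "w \<in> {}" using w by simp
  qed simp
  have "(\<Sum>v\<in>nodes T. card (ch T v - ?X)) = card (\<Union>v\<in>nodes T. ch T v - ?X)"
    using fin ch disjoint by (intro card_UN_disjoint[symmetric]) (blast intro: finite_subset)+
  also have "\<dots> \<le> card (nodes T)"
    using fin ch by (intro card_mono) auto
  finally have outside_X: "(\<Sum>v\<in>nodes T. card (ch T v - ?X)) \<le> card (nodes T)" .
  have "card (ch T v) \<le> card (ch T v - ?X) + card ?X" for v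
  proof -
    have "card (ch T v) \<le> card (ch T v - ?X) + card (ch T v \<inter> ?X)"
      by (metis Un_Diff_Int card_Un_le)
    moreover have "card (ch T v \<inter> ?X) \<le> card ?X"
      using finite_multi_parent[OF ft] by (intro card_mono) auto
    ultimately show ?thesis by linarith
  qed
  then have "(\<Sum>v\<in>nodes T. card (ch T v)) \<le> (\<Sum>v\<in>nodes T. card (ch T v - ?X) + card ?X)"
    by (rule sum_mono)
  also have "\<dots> = (\<Sum>v\<in>nodes T. card (ch T v - ?X)) + card (nodes T) * card ?X"
    by (simp add: sum.distrib)
  also have "\<dots> \<le> card (nodes T) * (card ?X + 1)"
    using outside_X by simp
  finally show ?thesis .
qed

lemma sum_card_ToDo_set_le:
  assumes "fault_tree T"
  shows "(\<Sum>v\<in>nodes T. card (ToDo_set T v)) \<le> card (nodes T)"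
proof -
  have fin: "finite (nodes T)" using assms by (simp add: fault_tree_def)
  have sub: "ToDo_set T v \<subseteq> nodes T" for v by (auto simp: ToDo_set_def)
  have "(\<Sum>v\<in>nodes T. card (ToDo_set T v)) = card (\<Union>v\<in>nodes T. ToDo_set T v)"
    using fin sub finite_subset[OF _ fin]
    by (intro card_UN_disjoint[symmetric]) (auto simp: ToDo_set_def)
  also have "\<dots> \<le> card (nodes T)"
    using fin sub by (intro card_mono) auto
  finally show ?thesis .
qed

theorem theorem29:
  "\<exists>C::nat. \<forall>(T::'a fault_tree) vs cs ws.
     fault_tree T \<and> valid_outer T vs \<and> valid_children T cs \<and> valid_inner T ws \<longrightarrow>
     sfpa2_cost T vs cs ws
       \<le> C * card (nodes T) * (card (multi_parent T) + 1) * 4 ^ card (multi_parent T)"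
proof (intro exI[of _ 9] allI impI, elim conjE)
  fix T :: "'a fault_tree" and vs cs ws
  assume ft: "fault_tree T" and vs: "valid_outer T vs"
    and cs: "valid_children T cs" and ws: "valid_inner T ws"
  let ?n = "card (nodes T)" and ?k = "card (multi_parent T)"
  have lengths: "length (cs v) + length (ws v) + 1 = card (ch T v) + card (ToDo_set T v) + 1"
    if "v \<in> nodes T" for v
    using that cs ws by (simp add: valid_children_def valid_inner_def distinct_card[symmetric])
  have "sfpa2_cost T vs cs ws \<le> (\<Sum>v\<leftarrow>vs. (length (cs v) + length (ws v) + 1) * (3 * 4 ^ ?k))"
    using sfpa2_cost_le[OF ft cs] vs by (simp add: valid_outer_def)
  also have "\<dots> = (\<Sum>v\<in>nodes T. card (ch T v) + card (ToDo_set T v) + 1) * (3 * 4 ^ ?k)"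
    using vs lengths by (simp add: valid_outer_def sum_list_distinct_conv_sum_set sum_distrib_right)
  also have "\<dots> \<le> (?n * (?k + 1) + ?n + ?n) * (3 * 4 ^ ?k)"
    using sum_card_ch_le[OF ft] sum_card_ToDo_set_le[OF ft]
    by (intro mult_le_mono1) (simp add: sum.distrib sum_Suc)
  also have "\<dots> \<le> 9 * ?n * (?k + 1) * 4 ^ ?k"
    by (simp add: algebra_simps)
  finally show "sfpa2_cost T vs cs ws \<le> 9 * ?n * (?k + 1) * 4 ^ ?k" .
qed

end
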